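(* Let $\mathbb{H}$ be a real-valued function on all quantum channels between finite-dimensional systems that satisfies monotonicity and additivity (as in the definition of channel entropy, without the normalization requirement) and is not identically zero. Then $\mathbb{H}(\mathbf{u}_2)>0$, where $\mathbf{u}_2$ is the uniform qubit state viewed as a channel with trivial input.
   Context: Systems are finite-dimensional; $\mathbf{u}^B=I^B/|B|$; a state $\rho^B$ is identified with the channel $\mathbb{C}\to B$, $1\mapsto\rho$. A superchannel from $\mathrm{CPTP}(A\to B)$ to $\mathrm{CPTP}(A'\to B)$ is $\Theta[\mathcal{N}]=\mathcal{E}^{RB\to B}\circ\mathcal{N}^{A\to B}\circ\mathcal{V}^{A'\to RA}$ with $\mathcal{V}$ an isometry channel and $\mathcal{E}$ a channel; it is mixing if in a realization with minimal $|R|$, $\mathcal{E}(\tau^R\otimes\mathbf{u}^B)=\mathbf{u}^B$ for every density matrix $\tau^R$. For same output system, $\mathcal{N}\succ\mathcal{M}$ iff $\mathcal{M}=\Theta[\mathcal{N}]$ for a mixing $\Theta$. For $\mathcal{N}\in\mathrm{CPTP}(A\to B)$, $\mathcal{M}\in\mathrm{CPTP}(A'\to B')$ in general: if $|B|>|B'|$, $\mathcal{N}\succ\mathcal{M}$ iff $\mathcal{N}\succ\mathcal{U}\circ\mathcal{M}$ for some isometry channel $\mathcal{U}:B'\to B$; if $|B|\le|B'|$, iff $\mathcal{W}\circ\mathcal{N}\succ\mathcal{M}$ for some isometry channel $\mathcal{W}:B\to B'$. Monotonicity: $\mathcal{N}^{A\to B}\succ\mathcal{M}^{A'\to B'}$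 implies $\mathbb{H}(\mathcal{N})\le\mathbb{H}(\mathcal{M})$. Additivity: $\mathbb{H}(\mathcal{N}\otimes\mathcal{M})=\mathbb{H}(\mathcal{N})+\mathbb{H}(\mathcal{M})$. *)

theory Defs
  imports Complex_Main
begin

text \<open>Matrices are represented as functions nat => nat => complex; the dimension
  is carried separately. A system of dimension n is C^n (n >= 1).\<close>

type_synonym cmat = "nat \<Rightarrow> nat \<Rightarrow> complex"

definition restr :: "nat \<Rightarrow> cmat \<Rightarrow> cmat" where
  "restr n A = (\<lambda>i j. if i < n \<and> j < n then A i j else 0)"

definition mtrace :: "nat \<Rightarrow> cmat \<Rightarrow> complex" where
  "mtrace n A = (\<Sum>i<n. A i i)"

definition idm :: "nat \<Rightarrow> cmat" where
  "idm n = (\<lambda>i j. if i < n \<and> j < n \<and> i = j then 1 else 0)"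

definition psd :: "nat \<Rightarrow> cmat \<Rightarrow> bool" where
  "psd n A \<longleftrightarrow> (\<forall>v :: nat \<Rightarrow> complex.
      (\<Sum>i<n. \<Sum>j<n. cnj (v i) * A i j * v j) \<in> \<real> \<and>
      0 \<le> Re (\<Sum>i<n. \<Sum>j<n. cnj (v i) * A i j * v j))"

definition density :: "nat \<Rightarrow> cmat \<Rightarrow> bool" where
  "density n A \<longleftrightarrow> psd n A \<and> mtrace n A = 1"

definition unif :: "nat \<Rightarrow> cmat" where
  "unif n = (\<lambda>i j. idm n i j / of_nat n)"

text \<open>Kronecker product P (x) Q, Q of dimension m; index of (x,y) is x*m+y.\<close>
definition kron :: "nat \<Rightarrow> cmat \<Rightarrow> cmat \<Rightarrow> cmat" where
  "kron m P Q = (\<lambda>x y. P (x div m) (y div m) * Q (x mod m) (y mod m))"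

definition unitmat :: "nat \<Rightarrow> nat \<Rightarrow> cmat" where
  "unitmat i j = (\<lambda>x y. if x = i \<and> y = j then 1 else 0)"

record channel =
  din :: nat
  dout :: nat
  act :: "cmat \<Rightarrow> cmat"

definition app :: "channel \<Rightarrow> cmat \<Rightarrow> cmat" where
  "app N X = restr (dout N) (act N (restr (din N) X))"

text \<open>(id_k (x) N)(X), ancilla first: index (a,i) is a*d+i.\<close>
definition idtensor :: "nat \<Rightarrow> channel \<Rightarrow> cmat \<Rightarrow> cmat" where
  "idtensor k N X = (\<lambda>x y. if x < k * dout N \<and> y < k * dout N then
      app N (\<lambda>i j. X (x div dout N * din N + i) (y div dout N * din N + j))
          (x mod dout N) (y mod dout N) else 0)"

definition is_linear_map :: "channel \<Rightarrow> bool" where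
  "is_linear_map N \<longleftrightarrow> (\<forall>(c::complex) X Y.
      app N (\<lambda>i j. c * X i j + Y i j) = (\<lambda>i j. c * app N X i j + app N Y i j))"

definition is_cp :: "channel \<Rightarrow> bool" where
  "is_cp N \<longleftrightarrow> (\<forall>k X. 1 \<le> k \<longrightarrow> psd (k * din N) X \<longrightarrow>
      psd (k * dout N) (idtensor k N X))"

definition is_tp :: "channel \<Rightarrow> bool" where
  "is_tp N \<longleftrightarrow> (\<forall>X. mtrace (dout N) (app N X) = mtrace (din N) X)"

definition is_channel :: "channel \<Rightarrow> bool" where
  "is_channel N \<longleftrightarrow> 1 \<le> din N \<and> 1 \<le> dout N \<and> is_linear_map N \<and> is_cp N \<and> is_tp N"

definition chan_eq :: "channel \<Rightarrow> channel \<Rightarrow> bool" where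
  "chan_eq N M \<longleftrightarrow> din N = din M \<and> dout N = dout M \<and> (\<forall>X. app N X = app M X)"

definition comp :: "channel \<Rightarrow> channel \<Rightarrow> channel" where
  "comp N M = \<lparr>din = din M, dout = dout N, act = (\<lambda>X. app N (app M X))\<rparr>"

text \<open>Tensor product N (x) M, N's systems first.\<close>
definition ctensor :: "channel \<Rightarrow> channel \<Rightarrow> channel" where
  "ctensor N M = \<lparr>din = din N * din M, dout = dout N * dout M,
     act = (\<lambda>X x y. \<Sum>i<din N. \<Sum>j<din N. \<Sum>k<din M. \<Sum>l<din M.
        X (i * din M + k) (j * din M + l) *
        kron (dout M) (app N (unitmat i j)) (app M (unitmat k l)) x y)\<rparr>"

definition is_isometry :: "nat \<Rightarrow> nat \<Rightarrow> cmat \<Rightarrow> bool" where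
  "is_isometry a b V \<longleftrightarrow> 1 \<le> a \<and> 1 \<le> b \<and>
     (\<forall>i<a. \<forall>j<a. (\<Sum>k<b. cnj (V k i) * V k j) = (if i = j then 1 else 0))"

definition iso_chan :: "nat \<Rightarrow> nat \<Rightarrow> cmat \<Rightarrow> channel" where
  "iso_chan a b V = \<lparr>din = a, dout = b,
     act = (\<lambda>X p q. \<Sum>i<a. \<Sum>j<a. V p i * X i j * cnj (V q j))\<rparr>"

text \<open>State rho on C^n as the channel C -> C^n, 1 |-> rho.\<close>
definition state_chan :: "nat \<Rightarrow> cmat \<Rightarrow> channel" where
  "state_chan n \<rho> = \<lparr>din = 1, dout = n, act = (\<lambda>X i j. X 0 0 * \<rho> i j)\<rparr>"

text \<open>Superchannel realization (r, V, E) from CPTP(A->B) to CPTP(A'->B):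
  Theta[N] = E o (id_R (x) N) o V with V : A' -> R A an isometry and E : R B -> B.\<close>
definition super :: "nat \<Rightarrow> nat \<Rightarrow> cmat \<Rightarrow> channel \<Rightarrow> channel \<Rightarrow> channel" where
  "super a' r V E N = \<lparr>din = a', dout = dout N,
     act = (\<lambda>X. app E (idtensor r N (app (iso_chan a' (r * din N) V) X)))\<rparr>"

definition is_realization :: "nat \<Rightarrow> nat \<Rightarrow> nat \<Rightarrow> nat \<Rightarrow> cmat \<Rightarrow> channel \<Rightarrow> bool" where
  "is_realization a b a' r V E \<longleftrightarrow> 1 \<le> r \<and> is_isometry a' (r * a) V \<and>
     is_channel E \<and> din E = r * b \<and> dout E = b"

definition same_super :: "nat \<Rightarrow> nat \<Rightarrow> nat \<Rightarrow> nat \<Rightarrow> cmat \<Rightarrow> channel \<Rightarrow>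
    nat \<Rightarrow> cmat \<Rightarrow> channel \<Rightarrow> bool" where
  "same_super a b a' r V E r' V' E' \<longleftrightarrow>
     (\<forall>N. is_channel N \<longrightarrow> din N = a \<longrightarrow> dout N = b \<longrightarrow>
        chan_eq (super a' r V E N) (super a' r' V' E' N))"

definition mixing_realization :: "nat \<Rightarrow> nat \<Rightarrow> nat \<Rightarrow> nat \<Rightarrow> cmat \<Rightarrow> channel \<Rightarrow> bool" where
  "mixing_realization a b a' r V E \<longleftrightarrow> is_realization a b a' r V E \<and>
     (\<forall>r' V' E'. is_realization a b a' r' V' E' \<longrightarrow> same_super a b a' r V E r' V' E' \<longrightarrow> r \<le> r') \<and>
     (\<forall>\<tau>. density r \<tau> \<longrightarrow> app E (kron b \<tau> (unif b)) = restr b (unif b))"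

definition maj_same :: "channel \<Rightarrow> channel \<Rightarrow> bool" where
  "maj_same N M \<longleftrightarrow> dout N = dout M \<and>
     (\<exists>r V E. mixing_realization (din N) (dout N) (din M) r V E \<and>
              chan_eq M (super (din M) r V E N))"

definition maj :: "channel \<Rightarrow> channel \<Rightarrow> bool" where
  "maj N M \<longleftrightarrow>
     (if dout N > dout M then
        (\<exists>U. is_isometry (dout M) (dout N) U \<and> maj_same N (comp (iso_chan (dout M) (dout N) U) M))
      else
        (\<exists>W. is_isometry (dout N) (dout M) W \<and> maj_same (comp (iso_chan (dout N) (dout M) W) N) M))"

end

theory Submission
  imports Defs
begin

text \<open>Every channel \<open>N : A \<rightarrow> B\<close> majorizes the replacement channel \<open>X \<mapsto> tr X \<cdot> u\<^sub>B\<close>, and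
  \<open>u\<^sub>n\<close> majorizes \<open>u\<^sub>m\<close> for \<open>n \<le> m\<close>. Conversely the trivial state \<open>u\<^sub>1\<close> majorizes \<open>N \<otimes> u\<^sub>B\<close>:
  a superchannel feeds the reference system to \<open>N\<close> and twirls the output of \<open>N\<close> by the Weyl
  operator selected by an ancilla; a maximally mixed ancilla depolarizes completely, so the
  superchannel is mixing. Monotonicity and additivity then give \<open>\<bbbH>(u\<^sub>1) = 0\<close>,
  \<open>\<bbbH>(u\<^sub>n) \<le> \<bbbH>(u\<^bsub>2\<^sup>n\<^esub>) \<le> n \<bbbH>(u\<^sub>2)\<close> and \<open>-\<bbbH>(u\<^sub>B) \<le> \<bbbH>(N) \<le> \<bbbH>(u\<^sub>B)\<close>, so \<open>\<bbbH>(u\<^sub>2) \<le> 0\<close> forces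
  \<open>\<bbbH>\<close> to vanish on all channels.\<close>

lemma block_index_less:
  fixes c i k d :: nat
  assumes "c < k" "i < d"
  shows "c * d + i < k * d"
proof -
  have "c * d + i < (c + 1) * d" using assms by simp
  also have "\<dots> \<le> k * d" using assms by (intro mult_right_mono) auto
  finally show ?thesis .
qed

lemma sum_lessThan_mult:
  fixes f :: "nat \<Rightarrow> 'a::comm_monoid_add"
  shows "(\<Sum>x<k*m. f x) = (\<Sum>c<k. \<Sum>p<m. f (c*m+p))"
proof -
  have "(\<Sum>x<k*m. f x) = (\<Sum>c<k. sum f {c*m..<c*m+m})"
    using sum.nat_group[of f m k] by simp
  also have "\<dots> = (\<Sum>c<k. \<Sum>p<m. f (c*m+p))"
  proof (rule sum.cong[OF refl])
    fix c
    show "sum f {c*m..<c*m+m} = (\<Sum>p<m. f (c*m+p))"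
      using sum.shift_bounds_nat_ivl[of f 0 "c*m" m] by (simp add: atLeast0LessThan add.commute)
  qed
  finally show ?thesis .
qed

lemma if_zero_mult: "(if P then a else 0) * (b::'a::mult_zero) = (if P then a * b else 0)"
  by simp

lemma mult_if_zero: "(b::'a::mult_zero) * (if P then a else 0) = (if P then b * a else 0)"
  by simp

lemma cnj_if_zero: "cnj (if P then a else 0) = (if P then cnj a else 0)"
  by simp

lemma if_conj_zero: "(if P \<and> Q then a else (0::'a::zero)) = (if P then if Q then a else 0 else 0)"
  by simp

lemma sum_if_zero: "(\<Sum>x\<in>A. if P then f x else 0) = (if P then \<Sum>x\<in>A. f x else 0)"
  by simp

lemmas if_zero_simps = if_zero_mult mult_if_zero cnj_if_zero if_conj_zero sum_if_zero

lemma sum_block_select: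
  fixes g :: "nat \<Rightarrow> complex"
  assumes "d < k" "0 < n"
  shows "(\<Sum>i'<k*n. (if i' div n = d then h (i' mod n) else 0) * g i') = (\<Sum>i<n. h i * g (d*n+i))"
proof -
  have "(\<Sum>i'<k*n. (if i' div n = d then h (i' mod n) else 0) * g i')
     = (\<Sum>c<k. \<Sum>i<n. (if c = d then h i else 0) * g (c*n+i))"
    using assms by (auto simp: sum_lessThan_mult intro!: sum.cong)
  also have "\<dots> = (\<Sum>c<k. if c = d then (\<Sum>i<n. h i * g (c*n+i)) else 0)"
    by (intro sum.cong) auto
  also have "\<dots> = (\<Sum>i<n. h i * g (d*n+i))"
    using assms by simp
  finally show ?thesis .
qed

lemma sum_block_sandwich:
  fixes h h' :: "nat \<Rightarrow> complex"
  assumes d: "d < k" and d': "d' < k" and n: "0 < n"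
  shows "(\<Sum>i<k*n. \<Sum>j<k*n. (if i div n = d then h (i mod n) else 0) * W i j
            * cnj (if j div n = d' then h' (j mod n) else 0))
       = (\<Sum>i<n. \<Sum>j<n. h i * W (d*n+i) (d'*n+j) * cnj (h' j))"
proof -
  have "(\<Sum>i<k*n. \<Sum>j<k*n. (if i div n = d then h (i mod n) else 0) * W i j
            * cnj (if j div n = d' then h' (j mod n) else 0))
      = (\<Sum>i<k*n. (if i div n = d then h (i mod n) else 0)
            * (\<Sum>j<k*n. (if j div n = d' then cnj (h' (j mod n)) else 0) * W i j))"
    by (auto simp: sum_distrib_left mult_ac intro!: sum.cong)
  also have "\<dots> = (\<Sum>i<k*n. (if i div n = d then h (i mod n) else 0)
            * (\<Sum>j<n. cnj (h' j) * W i (d'*n+j)))"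
    by (simp only: sum_block_select[OF d' n, where h="\<lambda>j. cnj (h' j)"])
  also have "\<dots> = (\<Sum>i<n. h i * (\<Sum>j<n. cnj (h' j) * W (d*n+i) (d'*n+j)))"
    by (rule sum_block_select[OF d n])
  also have "\<dots> = (\<Sum>i<n. \<Sum>j<n. h i * W (d*n+i) (d'*n+j) * cnj (h' j))"
    by (simp add: sum_distrib_left mult_ac)
  finally show ?thesis .
qed

lemma restr_restr [simp]: "restr n (restr n X) = restr n X"
  by (simp add: restr_def fun_eq_iff)

lemma restr_app [simp]: "restr (dout N) (app N X) = app N X"
  by (simp add: app_def)

lemma app_restr [simp]: "app N (restr (din N) X) = app N X"
  by (simp add: app_def)

lemma app_eq_0: "\<not> (p < dout N \<and> q < dout N) \<Longrightarrow> app N X p q = 0"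
  by (auto simp: app_def restr_def)

lemma app_cong:
  assumes "\<And>i j. i < din N \<Longrightarrow> j < din N \<Longrightarrow> X i j = Y i j"
  shows "app N X = app N Y"
proof -
  have "restr (din N) X = restr (din N) Y" using assms by (auto simp: restr_def fun_eq_iff)
  then show ?thesis by (metis app_restr)
qed

lemma chan_eq_app: "chan_eq N M \<Longrightarrow> app N = app M"
  by (auto simp: chan_eq_def)

lemma chan_eq_idtensor: "chan_eq N M \<Longrightarrow> idtensor k N = idtensor k M"
  unfolding idtensor_def by (auto simp: chan_eq_def fun_eq_iff)

lemma is_channel_chan_eq:
  assumes "chan_eq N M" "is_channel N"
  shows "is_channel M"
proof -
  have "din N = din M" "dout N = dout M" using assms(1) by (auto simp: chan_eq_def)
  with assms show ?thesis
    unfolding is_channel_def is_linear_map_def is_cp_def is_tp_def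
    by (simp add: chan_eq_app chan_eq_idtensor)
qed

lemma is_channel_dims: "is_channel N \<Longrightarrow> 0 < din N \<and> 0 < dout N"
  by (simp add: is_channel_def)

lemma mtrace_app: "is_channel N \<Longrightarrow> mtrace (dout N) (app N X) = mtrace (din N) X"
  by (simp add: is_channel_def is_tp_def)

lemma comp_simps [simp]: "din (comp A B) = din B" "dout (comp A B) = dout A"
  by (simp_all add: comp_def)

lemma app_comp: "app (comp A B) X = app A (app B X)"
  by (simp add: comp_def app_def)

lemma ctensor_simps [simp]: "din (ctensor N M) = din N * din M" "dout (ctensor N M) = dout N * dout M"
  by (simp_all add: ctensor_def)

lemma idtensor_comp:
  assumes d: "din A = dout B" and pos: "0 < dout B"
  shows "idtensor k (comp A B) X = idtensor k A (idtensor k B X)"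
proof (intro ext)
  fix x y
  show "idtensor k (comp A B) X x y = idtensor k A (idtensor k B X) x y"
  proof (cases "x < k * dout A \<and> y < k * dout A")
    case True
    then have xd: "x div dout A < k" "y div dout A < k"
      by (auto simp: less_mult_imp_div_less)
    have "app A (\<lambda>i j. idtensor k B X (x div dout A * din A + i) (y div dout A * din A + j))
        = app A (app B (\<lambda>i j. X (x div dout A * din B + i) (y div dout A * din B + j)))"
      by (rule app_cong) (use xd d pos in \<open>simp add: idtensor_def block_index_less\<close>)
    with True show ?thesis by (simp add: idtensor_def app_comp)
  qed (auto simp: idtensor_def)
qed

lemma is_channel_comp:
  assumes cA: "is_channel A" and cB: "is_channel B" and d: "din A = dout B"
  shows "is_channel (comp A B)"
proof -
  have "is_linear_map (comp A B)"
    using cA cB by (simp add: is_channel_def is_linear_map_def app_comp)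
  moreover have "is_tp (comp A B)"
    using cA cB d by (simp add: is_channel_def is_tp_def app_comp)
  moreover have "is_cp (comp A B)"
    using cA cB d is_channel_dims[OF cB]
    by (simp add: is_channel_def is_cp_def idtensor_comp)
  ultimately show ?thesis using cA cB by (simp add: is_channel_def)
qed

lemma linear_appD:
  "is_linear_map N \<Longrightarrow> app N (\<lambda>i j. c * X i j + Y i j) = (\<lambda>i j. c * app N X i j + app N Y i j)"
  by (simp add: is_linear_map_def)

lemma linear_app_zero:
  assumes "is_linear_map N"
  shows "app N (\<lambda>i j. 0) = (\<lambda>i j. 0)"
proof -
  have "app N (\<lambda>i j. 1 * 0 + 0) = (\<lambda>i j. 1 * app N (\<lambda>i j. 0) i j + app N (\<lambda>i j. 0) i j)"
    by (rule linear_appD[OF assms])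
  then show ?thesis by (simp add: fun_eq_iff)
qed

lemma linear_app_scale:
  assumes "is_linear_map N"
  shows "app N (\<lambda>i j. c * X i j) = (\<lambda>p q. c * app N X p q)"
proof -
  have "app N (\<lambda>i j. c * X i j + 0) = (\<lambda>i j. c * app N X i j + app N (\<lambda>i j. 0) i j)"
    by (rule linear_appD[OF assms])
  then show ?thesis using linear_app_zero[OF assms] by simp
qed

lemma linear_app_sum:
  assumes lin: "is_linear_map N" and fin: "finite F"
  shows "app N (\<lambda>i j. \<Sum>e\<in>F. c e * Y e i j) = (\<lambda>p q. \<Sum>e\<in>F. c e * app N (Y e) p q)"
  using fin
proof (induction F rule: finite_induct)
  case empty
  then show ?case using linear_app_zero[OF lin] by simp
next
  case (insert x F)
  then show ?case using lin unfolding is_linear_map_def by simp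
qed

lemma restr_eq_sum_unitmat:
  "restr d X = (\<lambda>i j. \<Sum>e\<in>{..<d}\<times>{..<d}. X (fst e) (snd e) * unitmat (fst e) (snd e) i j)"
proof (intro ext)
  fix i j
  have "(\<Sum>e\<in>{..<d}\<times>{..<d}. X (fst e) (snd e) * unitmat (fst e) (snd e) i j)
      = (\<Sum>e\<in>{..<d}\<times>{..<d}. if e = (i, j) then X i j else 0)"
    by (rule sum.cong) (auto simp: unitmat_def)
  then show "restr d X i j = (\<Sum>e\<in>{..<d}\<times>{..<d}. X (fst e) (snd e) * unitmat (fst e) (snd e) i j)"
    by (simp add: restr_def)
qed

lemma linear_app_expand:
  assumes "is_linear_map N"
  shows "app N X = (\<lambda>p q. \<Sum>i<din N. \<Sum>j<din N. X i j * app N (unitmat i j) p q)"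
proof -
  have "app N X = app N (restr (din N) X)" by simp
  also have "\<dots> = (\<lambda>p q. \<Sum>e\<in>{..<din N}\<times>{..<din N}. X (fst e) (snd e) * app N (unitmat (fst e) (snd e)) p q)"
    unfolding restr_eq_sum_unitmat by (rule linear_app_sum[OF assms]) simp
  also have "\<dots> = (\<lambda>p q. \<Sum>i<din N. \<Sum>j<din N. X i j * app N (unitmat i j) p q)"
    by (simp add: sum.cartesian_product case_prod_beta)
  finally show ?thesis .
qed

subsection \<open>Kraus representations\<close>

definition sandwich :: "nat \<Rightarrow> cmat \<Rightarrow> cmat \<Rightarrow> cmat" where
  "sandwich n A X = (\<lambda>p q. \<Sum>i<n. \<Sum>j<n. A p i * X i j * cnj (A q j))"

definition kraus_chan :: "nat \<Rightarrow> nat \<Rightarrow> 'e set \<Rightarrow> ('e \<Rightarrow> cmat) \<Rightarrow> channel" where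
  "kraus_chan n m Es K = \<lparr>din = n, dout = m, act = (\<lambda>X p q. \<Sum>e\<in>Es. sandwich n (K e) X p q)\<rparr>"

lemma kraus_chan_simps [simp]: "din (kraus_chan n m Es K) = n" "dout (kraus_chan n m Es K) = m"
  by (simp_all add: kraus_chan_def)

lemma app_kraus_chan:
  "app (kraus_chan n m Es K) X =
     (\<lambda>p q. if p < m \<and> q < m then \<Sum>e\<in>Es. sandwich n (K e) X p q else 0)"
  unfolding app_def kraus_chan_def sandwich_def restr_def
  by (auto simp: fun_eq_iff intro!: sum.cong)

lemma quadratic_form_sandwich:
  "(\<Sum>x<m. \<Sum>y<m. cnj (v x) * sandwich n A X x y * v y)
     = (\<Sum>i<n. \<Sum>j<n. cnj (\<Sum>x<m. cnj (A x i) * v x) * X i j * (\<Sum>y<m. cnj (A y j) * v y))"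
proof -
  have "(\<Sum>x<m. \<Sum>y<m. cnj (v x) * sandwich n A X x y * v y)
      = (\<Sum>x<m. \<Sum>y<m. \<Sum>i<n. \<Sum>j<n. cnj (v x) * A x i * X i j * cnj (A y j) * v y)"
    by (simp add: sandwich_def sum_distrib_left sum_distrib_right mult_ac)
  also have "\<dots> = (\<Sum>x<m. \<Sum>i<n. \<Sum>y<m. \<Sum>j<n. cnj (v x) * A x i * X i j * cnj (A y j) * v y)"
    by (intro sum.cong refl sum.swap)
  also have "\<dots> = (\<Sum>i<n. \<Sum>x<m. \<Sum>j<n. \<Sum>y<m. cnj (v x) * A x i * X i j * cnj (A y j) * v y)"
    by (subst sum.swap) (intro sum.cong refl sum.swap)
  also have "\<dots> = (\<Sum>i<n. \<Sum>j<n. \<Sum>x<m. \<Sum>y<m. cnj (v x) * A x i * X i j * cnj (A y j) * v y)"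
    by (intro sum.cong refl sum.swap)
  also have "\<dots> = (\<Sum>i<n. \<Sum>j<n. cnj (\<Sum>x<m. cnj (A x i) * v x) * X i j * (\<Sum>y<m. cnj (A y j) * v y))"
    by (simp add: sum_distrib_left sum_distrib_right mult_ac)
  finally show ?thesis .
qed

lemma psd_sandwich:
  assumes "psd n X"
  shows "psd m (sandwich n A X)"
  unfolding psd_def quadratic_form_sandwich
proof
  fix v :: "nat \<Rightarrow> complex"
  show "(\<Sum>i<n. \<Sum>j<n. cnj (\<Sum>x<m. cnj (A x i) * v x) * X i j * (\<Sum>y<m. cnj (A y j) * v y)) \<in> \<real> \<and>
      0 \<le> Re (\<Sum>i<n. \<Sum>j<n. cnj (\<Sum>x<m. cnj (A x i) * v x) * X i j * (\<Sum>y<m. cnj (A y j) * v y))"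
    using assms[unfolded psd_def, rule_format, of "\<lambda>i. \<Sum>x<m. cnj (A x i) * v x"] .
qed

lemma psd_sum:
  assumes psd: "\<And>e. e \<in> Es \<Longrightarrow> psd n (F e)"
  shows "psd n (\<lambda>x y. \<Sum>e\<in>Es. F e x y)"
  unfolding psd_def
proof
  fix v :: "nat \<Rightarrow> complex"
  define Q where "Q e = (\<Sum>i<n. \<Sum>j<n. cnj (v i) * F e i j * v j)" for e
  have Q: "Q e \<in> \<real> \<and> 0 \<le> Re (Q e)" if "e \<in> Es" for e
    using psd[OF that] unfolding psd_def Q_def by blast
  have "(\<Sum>i<n. \<Sum>j<n. cnj (v i) * (\<Sum>e\<in>Es. F e i j) * v j) = sum Q Es"
    by (simp add: Q_def sum_distrib_left sum_distrib_right sum.swap[of _ Es])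
  moreover have "sum Q Es \<in> \<real>" using Q by (auto intro: sum_in_Reals)
  moreover have "0 \<le> Re (sum Q Es)" using Q by (simp add: Re_sum sum_nonneg)
  ultimately show "(\<Sum>i<n. \<Sum>j<n. cnj (v i) * (\<Sum>e\<in>Es. F e i j) * v j) \<in> \<real> \<and>
      0 \<le> Re (\<Sum>i<n. \<Sum>j<n. cnj (v i) * (\<Sum>e\<in>Es. F e i j) * v j)" by simp
qed

lemma psd_cong: "psd n A \<Longrightarrow> (\<And>x y. x < n \<Longrightarrow> y < n \<Longrightarrow> A x y = B x y) \<Longrightarrow> psd n B"
  unfolding psd_def by (metis (no_types, lifting) lessThan_iff sum.cong)

lemma mtrace_sandwich:
  "mtrace m (sandwich n A X) = (\<Sum>i<n. \<Sum>j<n. X i j * (\<Sum>p<m. A p i * cnj (A p j)))"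
proof -
  have "mtrace m (sandwich n A X) = (\<Sum>i<n. \<Sum>p<m. \<Sum>j<n. A p i * X i j * cnj (A p j))"
    unfolding mtrace_def sandwich_def by (rule sum.swap)
  also have "\<dots> = (\<Sum>i<n. \<Sum>j<n. \<Sum>p<m. A p i * X i j * cnj (A p j))"
    by (intro sum.cong refl sum.swap)
  finally show ?thesis by (simp add: sum_distrib_left mult_ac)
qed

text \<open>\<open>block_diag n m K\<close> is the block diagonal matrix \<open>I \<otimes> K\<close> of an \<open>m \<times> n\<close> matrix \<open>K\<close>.\<close>

definition block_diag :: "nat \<Rightarrow> nat \<Rightarrow> cmat \<Rightarrow> cmat" where
  "block_diag n m K = (\<lambda>x i. if i div n = x div m then K (x mod m) (i mod n) else 0)"

lemma idtensor_kraus_chan: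
  assumes n: "0 < n" and x: "x < k*m" and y: "y < k*m"
  shows "idtensor k (kraus_chan n m Es K) X x y = (\<Sum>e\<in>Es. sandwich (k*n) (block_diag n m (K e)) X x y)"
proof -
  have xd: "x div m < k" "y div m < k" using x y by (auto simp: less_mult_imp_div_less)
  have m: "0 < m" using x by (cases m) auto
  have "sandwich (k*n) (block_diag n m A) X x y
      = sandwich n A (\<lambda>i j. X (x div m * n + i) (y div m * n + j)) (x mod m) (y mod m)" for A
    unfolding sandwich_def block_diag_def by (rule sum_block_sandwich[OF xd n])
  with x y m show ?thesis
    by (simp add: idtensor_def app_kraus_chan)
qed

lemma is_channel_kraus_chan:
  assumes n: "1 \<le> n" and m: "1 \<le> m"
    and complete: "\<And>i j. i < n \<Longrightarrow> j < n \<Longrightarrow>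
       (\<Sum>e\<in>Es. \<Sum>p<m. K e p i * cnj (K e p j)) = (if i = j then 1 else 0)"
  shows "is_channel (kraus_chan n m Es K)"
proof -
  have "is_linear_map (kraus_chan n m Es K)"
    by (simp add: is_linear_map_def app_kraus_chan sandwich_def fun_eq_iff
        sum.distrib sum_distrib_left algebra_simps)
  moreover have "is_tp (kraus_chan n m Es K)"
    unfolding is_tp_def
  proof
    fix X
    have "mtrace m (app (kraus_chan n m Es K) X) = (\<Sum>e\<in>Es. mtrace m (sandwich n (K e) X))"
      unfolding mtrace_def app_kraus_chan by (simp add: sum.swap[of _ "{..<m}"])
    also have "\<dots> = (\<Sum>e\<in>Es. \<Sum>i<n. \<Sum>j<n. X i j * (\<Sum>p<m. K e p i * cnj (K e p j)))"
      by (simp add: mtrace_sandwich)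
    also have "\<dots> = (\<Sum>i<n. \<Sum>j<n. X i j * (\<Sum>e\<in>Es. \<Sum>p<m. K e p i * cnj (K e p j)))"
      by (simp add: sum_distrib_left sum.swap[of _ Es "{..<n}"] sum.swap[of _ Es "{..<n}"])
    also have "\<dots> = mtrace n X"
      by (simp add: complete mtrace_def if_zero_simps cong: if_cong)
    finally show "mtrace (dout (kraus_chan n m Es K)) (app (kraus_chan n m Es K) X)
        = mtrace (din (kraus_chan n m Es K)) X" by simp
  qed
  moreover have "is_cp (kraus_chan n m Es K)"
    unfolding is_cp_def
  proof (intro allI impI)
    fix k X assume "1 \<le> k" and "psd (k * din (kraus_chan n m Es K)) X"
    then have "psd (k*m) (\<lambda>x y. \<Sum>e\<in>Es. sandwich (k*n) (block_diag n m (K e)) X x y)"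
      by (intro psd_sum psd_sandwich) simp
    then have "psd (k*m) (idtensor k (kraus_chan n m Es K) X)"
      by (rule psd_cong) (use n in \<open>simp add: idtensor_kraus_chan\<close>)
    then show "psd (k * dout (kraus_chan n m Es K)) (idtensor k (kraus_chan n m Es K) X)"
      by simp
  qed
  ultimately show ?thesis using n m by (simp add: is_channel_def)
qed

lemma iso_chan_simps [simp]: "din (iso_chan a b V) = a" "dout (iso_chan a b V) = b"
  by (simp_all add: iso_chan_def)

lemma iso_chan_eq_kraus_chan: "iso_chan a b V = kraus_chan a b {()} (\<lambda>_. V)"
  by (simp add: iso_chan_def kraus_chan_def sandwich_def)

lemma app_iso_chan:
  "app (iso_chan a b V) X = (\<lambda>p q. if p < b \<and> q < b then sandwich a V X p q else 0)"
  by (simp add: iso_chan_eq_kraus_chan app_kraus_chan cong: if_cong)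

lemma is_channel_iso_chan:
  assumes "is_isometry a b V"
  shows "is_channel (iso_chan a b V)"
  unfolding iso_chan_eq_kraus_chan
proof (rule is_channel_kraus_chan)
  show "1 \<le> a" "1 \<le> b" using assms by (auto simp: is_isometry_def)
  fix i j assume "i < a" "j < a"
  then have "cnj (\<Sum>k<b. cnj (V k i) * V k j) = (if i = j then 1 else 0)"
    using assms by (simp add: is_isometry_def)
  then show "(\<Sum>e\<in>{()}. \<Sum>p<b. V p i * cnj (V p j)) = (if i = j then 1 else 0)"
    by (simp add: mult.commute)
qed

definition embed_mat :: "nat \<Rightarrow> cmat" where
  "embed_mat a = (\<lambda>p i. if p = i \<and> i < a then 1 else 0)"

lemma is_isometry_embed_mat: "1 \<le> a \<Longrightarrow> a \<le> b \<Longrightarrow> is_isometry a b (embed_mat a)"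
  unfolding is_isometry_def embed_mat_def
proof (intro conjI allI impI)
  fix i j assume "1 \<le> a" "a \<le> b" "i < a" "j < a"
  then show "(\<Sum>k<b. cnj (if k = i \<and> i < a then 1 else 0) * (if k = j \<and> j < a then 1 else 0))
      = (if i = j then 1 else 0)"
    by (simp add: if_zero_simps cong: if_cong)
qed auto

lemma app_embed_mat:
  "app (iso_chan a b (embed_mat a)) X = (\<lambda>p q. if p < b \<and> q < b \<and> p < a \<and> q < a then X p q else 0)"
  by (auto simp: app_iso_chan sandwich_def embed_mat_def fun_eq_iff if_zero_simps cong: if_cong)

definition inv_sqrt :: "nat \<Rightarrow> complex" where
  "inv_sqrt n = complex_of_real (1 / sqrt (real n))"

lemma inv_sqrt_mult_cnj [simp]: "0 < n \<Longrightarrow> inv_sqrt n * cnj (inv_sqrt n) = 1 / of_nat n"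
proof -
  assume "0 < n"
  then have "(1 / sqrt (real n)) * (1 / sqrt (real n)) = 1 / real n"
    by (simp add: real_sqrt_mult[symmetric])
  then show ?thesis
    by (simp only: inv_sqrt_def complex_cnj_complex_of_real of_real_mult[symmetric]) simp
qed

lemma inv_sqrt_scale: "0 < n \<Longrightarrow> inv_sqrt n * z * cnj (inv_sqrt n) = z / of_nat n"
  by (metis inv_sqrt_mult_cnj mult.commute mult.left_commute times_divide_eq_right mult_1_right)

lemma unif_eq: "unif n p q = (if p < n \<and> q < n \<and> p = q then 1 / of_nat n else 0)"
  by (simp add: unif_def idm_def)

lemma restr_unif [simp]: "restr n (unif n) = unif n"
  by (simp add: restr_def unif_eq fun_eq_iff)

lemma sandwich_matrix_unit:
  "sandwich n (\<lambda>p i. if p = p0 \<and> i = i0 then c else 0) X p q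
     = (if p = p0 \<and> q = p0 \<and> i0 < n then c * cnj c * X i0 i0 else 0)"
  by (auto simp: sandwich_def if_zero_simps mult_ac cong: if_cong)

definition depol :: "nat \<Rightarrow> nat \<Rightarrow> channel" where
  "depol n m = kraus_chan n m ({..<m} \<times> {..<n})
     (\<lambda>e p i. if p = fst e \<and> i = snd e then inv_sqrt m else 0)"

lemma depol_simps [simp]: "din (depol n m) = n" "dout (depol n m) = m"
  by (simp_all add: depol_def)

lemma app_depol:
  assumes "0 < m"
  shows "app (depol n m) X = (\<lambda>p q. mtrace n X * unif m p q)"
proof (intro ext)
  fix p q
  have "(\<Sum>e\<in>{..<m} \<times> {..<n}. sandwich n (\<lambda>p i. if p = fst e \<and> i = snd e then inv_sqrt m else 0) X p q)
      = (\<Sum>a<m. \<Sum>b<n. if p = a \<and> q = a then X b b / of_nat m else 0)"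
    using assms by (simp add: sum.cartesian_product' sandwich_matrix_unit cong: if_cong)
  also have "\<dots> = (if p < m \<and> p = q then mtrace n X / of_nat m else 0)"
    by (auto simp: mtrace_def sum_divide_distrib if_zero_simps cong: if_cong)
  finally show "app (depol n m) X p q = mtrace n X * unif m p q"
    by (auto simp: depol_def app_kraus_chan unif_eq)
qed

lemma is_channel_depol:
  assumes "1 \<le> n" "1 \<le> m"
  shows "is_channel (depol n m)"
  unfolding depol_def
proof (rule is_channel_kraus_chan)
  fix i j assume "i < n" "j < n"
  then show "(\<Sum>e\<in>{..<m} \<times> {..<n}. \<Sum>p<m. (if p = fst e \<and> i = snd e then inv_sqrt m else 0)
              * cnj (if p = fst e \<and> j = snd e then inv_sqrt m else 0)) = (if i = j then 1 else 0)"
    using assms by (simp add: sum.cartesian_product' if_zero_simps cong: if_cong)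
qed (use assms in auto)

lemma state_chan_simps [simp]: "din (state_chan n \<rho>) = 1" "dout (state_chan n \<rho>) = n"
  by (simp_all add: state_chan_def)

lemma app_state_chan:
  "app (state_chan n \<rho>) X = (\<lambda>p q. if p < n \<and> q < n then X 0 0 * \<rho> p q else 0)"
  by (simp add: app_def state_chan_def restr_def fun_eq_iff)

lemma is_channel_state_unif:
  assumes "1 \<le> n"
  shows "is_channel (state_chan n (unif n))"
  by (rule is_channel_chan_eq[OF _ is_channel_depol[of 1 n]])
     (use assms in \<open>auto simp: chan_eq_def app_depol app_state_chan mtrace_def unif_eq fun_eq_iff\<close>)

definition idtensor_chan :: "nat \<Rightarrow> channel \<Rightarrow> channel" where
  "idtensor_chan k N = \<lparr>din = k * din N, dout = k * dout N, act = idtensor k N\<rparr>"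

lemma idtensor_chan_simps [simp]:
  "din (idtensor_chan k N) = k * din N" "dout (idtensor_chan k N) = k * dout N"
  by (simp_all add: idtensor_chan_def)

lemma idtensor_restr: "idtensor k N (restr (k * din N) X) = idtensor k N X"
proof (intro ext)
  fix x y
  show "idtensor k N (restr (k * din N) X) x y = idtensor k N X x y"
  proof (cases "x < k * dout N \<and> y < k * dout N")
    case True
    then have "app N (\<lambda>i j. restr (k * din N) X (x div dout N * din N + i) (y div dout N * din N + j))
       = app N (\<lambda>i j. X (x div dout N * din N + i) (y div dout N * din N + j))"
      by (intro app_cong) (auto simp: restr_def less_mult_imp_div_less intro!: block_index_less)
    with True show ?thesis by (simp add: idtensor_def)
  qed (auto simp: idtensor_def)
qed

lemma app_idtensor_chan: "app (idtensor_chan k N) X = idtensor k N X"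
proof -
  have "restr (k * dout N) (idtensor k N X) = idtensor k N X"
    by (simp add: restr_def idtensor_def fun_eq_iff)
  then show ?thesis by (simp add: app_def idtensor_chan_def idtensor_restr)
qed

lemma idtensor_idtensor_chan:
  assumes "0 < dout N"
  shows "idtensor m (idtensor_chan k N) X = idtensor (m*k) N X"
proof (intro ext)
  fix x y
  show "idtensor m (idtensor_chan k N) X x y = idtensor (m*k) N X x y"
  proof (cases "x < m * (k * dout N) \<and> y < m * (k * dout N)")
    case True
    then have k: "0 < k" by (cases k) auto
    have index: "z div (k * dout N) * (k * e) + z mod (k * dout N) div dout N * e = z div dout N * e"
      for z e :: nat
    proof -
      have "z mod (dout N * k) = dout N * (z div dout N mod k) + z mod dout N"
        by (rule mod_mult2_eq)
      then have "z mod (k * dout N) div dout N = z div dout N mod k"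
        using assms by (simp add: mult.commute)
      moreover have "z div (k * dout N) = z div dout N div k"
        by (metis div_mult2_eq mult.commute)
      ultimately show ?thesis by (metis add_mult_distrib div_mult_mod_eq mult.assoc)
    qed
    show ?thesis
      using True k assms
      by (simp add: idtensor_def app_idtensor_chan mod_mod_cancel add.assoc[symmetric] index mult.assoc)
  qed (auto simp: idtensor_def mult.assoc)
qed

lemma mtrace_idtensor:
  assumes "is_channel N"
  shows "mtrace (k * dout N) (idtensor k N X) = mtrace (k * din N) X"
proof -
  have "mtrace (k * dout N) (idtensor k N X)
      = (\<Sum>c<k. mtrace (dout N) (app N (\<lambda>i j. X (c * din N + i) (c * din N + j))))"
    using is_channel_dims[OF assms]
    by (auto simp: mtrace_def sum_lessThan_mult idtensor_def block_index_less intro!: sum.cong)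
  also have "\<dots> = (\<Sum>c<k. mtrace (din N) (\<lambda>i j. X (c * din N + i) (c * din N + j)))"
    by (simp only: mtrace_app[OF assms])
  also have "\<dots> = mtrace (k * din N) X"
    by (simp add: mtrace_def sum_lessThan_mult)
  finally show ?thesis .
qed

lemma is_channel_idtensor_chan:
  assumes c: "is_channel N" and k: "1 \<le> k"
  shows "is_channel (idtensor_chan k N)"
proof -
  have "is_linear_map (idtensor_chan k N)"
    using c unfolding is_linear_map_def app_idtensor_chan
    by (auto simp: idtensor_def fun_eq_iff is_channel_def linear_appD)
  moreover have "is_tp (idtensor_chan k N)"
    using c by (simp add: is_tp_def app_idtensor_chan mtrace_idtensor)
  moreover have "is_cp (idtensor_chan k N)"
    unfolding is_cp_def
  proof (intro allI impI)
    fix m X assume m: "1 \<le> m" and "psd (m * din (idtensor_chan k N)) X"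
    then have "psd ((m * k) * din N) X" by (simp add: mult.assoc)
    moreover have "1 \<le> m * k" using m k by simp
    ultimately have "psd ((m * k) * dout N) (idtensor (m*k) N X)"
      using c by (simp add: is_channel_def is_cp_def)
    then show "psd (m * dout (idtensor_chan k N)) (idtensor m (idtensor_chan k N) X)"
      using is_channel_dims[OF c] by (simp add: idtensor_idtensor_chan mult.assoc)
  qed
  ultimately show ?thesis using c k by (auto simp: is_channel_def)
qed

lemma super_simps [simp]: "din (super a' r V E N) = a'" "dout (super a' r V E N) = dout N"
  by (simp_all add: super_def)

lemma app_super:
  assumes "dout E = dout N"
  shows "app (super a' r V E N) X = app E (idtensor r N (app (iso_chan a' (r * din N) V) X))"
proof -
  have "app (super a' r V E N) X
      = restr (dout N) (app E (idtensor r N (app (iso_chan a' (r * din N) V) (restr a' X))))"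
    unfolding app_def[of "super a' r V E N"] by (simp add: super_def)
  then show ?thesis
    using restr_app[of E] app_restr[of "iso_chan a' (r * din N) V" X] assms by simp
qed

lemma idtensor_1: "0 < dout N \<Longrightarrow> idtensor 1 N X = app N X"
  by (auto simp: idtensor_def app_eq_0 fun_eq_iff)

text \<open>The rows of an isometry \<open>V\<close> have the norms of the diagonal entries of the projection
  \<open>V V\<^sup>*\<close>; idempotence of \<open>V V\<^sup>*\<close> bounds them by \<open>1\<close>.\<close>

lemma isometry_projection_idempotent:
  assumes "is_isometry a b V"
  shows "(\<Sum>l<b. (\<Sum>i<a. V k i * cnj (V l i)) * cnj (\<Sum>i<a. V k i * cnj (V l i)))
       = (\<Sum>i<a. V k i * cnj (V k i))"
proof -
  have orth: "\<And>i j. i < a \<Longrightarrow> j < a \<Longrightarrow> (\<Sum>l<b. cnj (V l i) * V l j) = (if i = j then 1 else 0)"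
    using assms by (simp add: is_isometry_def)
  have "(\<Sum>l<b. (\<Sum>i<a. V k i * cnj (V l i)) * cnj (\<Sum>i<a. V k i * cnj (V l i)))
      = (\<Sum>l<b. \<Sum>i<a. \<Sum>j<a. V k i * cnj (V k j) * (cnj (V l i) * V l j))"
    by (simp add: sum_distrib_left sum_distrib_right mult_ac)
  also have "\<dots> = (\<Sum>i<a. \<Sum>j<a. \<Sum>l<b. V k i * cnj (V k j) * (cnj (V l i) * V l j))"
    by (subst sum.swap) (intro sum.cong refl sum.swap)
  also have "\<dots> = (\<Sum>i<a. \<Sum>j<a. V k i * cnj (V k j) * (if i = j then 1 else 0))"
    by (simp add: sum_distrib_left[symmetric] orth)
  finally show ?thesis by (simp add: if_zero_simps cong: if_cong)
qed

lemma isometry_dim_le: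
  assumes iso: "is_isometry a b V"
  shows "a \<le> b"
proof -
  define w where "w k = (\<Sum>i<a. (cmod (V k i))\<^sup>2)" for k
  have w_nonneg: "0 \<le> w k" for k by (simp add: w_def sum_nonneg)
  have w_le_1: "w k \<le> 1" if "k < b" for k
  proof -
    let ?P = "\<lambda>l. \<Sum>i<a. V k i * cnj (V l i)"
    have "complex_of_real (\<Sum>l<b. (cmod (?P l))\<^sup>2) = complex_of_real (w k)"
      using isometry_projection_idempotent[OF iso, of k]
      by (simp only: of_real_sum complex_norm_square w_def)
    then have "(\<Sum>l<b. (cmod (?P l))\<^sup>2) = w k" by (simp only: of_real_eq_iff)
    moreover have "(cmod (?P k))\<^sup>2 \<le> (\<Sum>l<b. (cmod (?P l))\<^sup>2)"
      using that by (intro member_le_sum) auto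
    moreover have "?P k = complex_of_real (w k)"
      by (simp only: w_def of_real_sum complex_norm_square)
    then have "cmod (?P k) = w k" using w_nonneg[of k] by simp
    ultimately have "w k * w k \<le> w k" by (simp add: power2_eq_square)
    with w_nonneg[of k] show ?thesis by (cases "w k = 0") (auto simp: mult_le_cancel_right1)
  qed
  have "complex_of_real (\<Sum>k<b. w k) = (\<Sum>k<b. \<Sum>i<a. V k i * cnj (V k i))"
    by (simp only: w_def of_real_sum complex_norm_square)
  also have "\<dots> = (\<Sum>i<a. cnj (\<Sum>k<b. cnj (V k i) * V k i))"
    by (subst sum.swap) (simp add: mult.commute)
  also have "\<dots> = of_nat a"
    using iso by (simp add: is_isometry_def)
  finally have "(\<Sum>k<b. w k) = real a" by (metis of_real_eq_iff of_real_of_nat_eq)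
  moreover have "(\<Sum>k<b. w k) \<le> real b"
    using sum_mono[of "{..<b}" w "\<lambda>_. 1"] w_le_1 by simp
  ultimately show ?thesis by simp
qed

subsection \<open>Majorization of completely depolarizing channels\<close>

lemma density_1: "density 1 \<tau> \<Longrightarrow> \<tau> 0 0 = 1"
  by (simp add: density_def mtrace_def)

lemma mtrace_kron_unif: "0 < D \<Longrightarrow> mtrace D (kron D \<tau> (unif D)) = \<tau> 0 0"
  by (simp add: mtrace_def kron_def unif_eq)

lemma mixing_realization_depol:
  assumes "1 \<le> a'" "a' \<le> a" "1 \<le> b"
  shows "mixing_realization a b a' 1 (embed_mat a') (depol b b)"
  unfolding mixing_realization_def
proof (intro conjI allI impI)
  show "is_realization a b a' 1 (embed_mat a') (depol b b)"
    using assms by (simp add: is_realization_def is_isometry_embed_mat is_channel_depol)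
next
  fix r' V' E' assume "is_realization a b a' r' V' E'"
  then show "1 \<le> r'" by (simp add: is_realization_def)
next
  fix \<tau> assume "density 1 \<tau>"
  then show "app (depol b b) (kron b \<tau> (unif b)) = restr b (unif b)"
    using assms by (simp add: app_depol mtrace_kron_unif density_1)
qed

lemma app_super_depol:
  assumes c: "is_channel N" and a': "a' \<le> din N"
  shows "app (super a' 1 (embed_mat a') (depol (dout N) (dout N)) N) X
       = (\<lambda>p q. mtrace a' X * unif (dout N) p q)"
proof -
  let ?V = "iso_chan a' (din N) (embed_mat a')"
  have "mtrace (dout N) (app N (app ?V X)) = mtrace (din N) (app ?V X)"
    by (rule mtrace_app[OF c])
  also have "\<dots> = mtrace a' X"
    unfolding mtrace_def app_embed_mat using a'
    by (intro sum.mono_neutral_cong_right) auto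
  finally have tr: "mtrace (dout N) (app N (app ?V X)) = mtrace a' X" .
  have "app (super a' 1 (embed_mat a') (depol (dout N) (dout N)) N) X
      = app (depol (dout N) (dout N)) (idtensor 1 N (app (iso_chan a' (1 * din N) (embed_mat a')) X))"
    by (rule app_super) simp
  also have "\<dots> = app (depol (dout N) (dout N)) (app N (app ?V X))"
    using is_channel_dims[OF c] by (simp only: idtensor_1 mult_1)
  finally show ?thesis
    using is_channel_dims[OF c] by (simp add: app_depol tr)
qed

lemma maj_replacement:
  assumes cQ: "is_channel Q" and cS: "is_channel S"
    and dims: "din S \<le> din Q" "dout Q \<le> dout S"
    and appS: "\<And>X. app S X = (\<lambda>p q. mtrace (din S) X * unif (dout S) p q)"
  shows "maj Q S"
proof -
  let ?W = "embed_mat (dout Q)"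
  define Q' where "Q' = comp (iso_chan (dout Q) (dout S) ?W) Q"
  have iso: "is_isometry (dout Q) (dout S) ?W"
    using is_channel_dims[OF cQ] dims by (intro is_isometry_embed_mat) auto
  have cQ': "is_channel Q'"
    unfolding Q'_def by (rule is_channel_comp[OF is_channel_iso_chan[OF iso] cQ]) simp
  have dims': "din Q' = din Q" "dout Q' = dout S" by (simp_all add: Q'_def)
  have "mixing_realization (din Q) (dout S) (din S) 1 (embed_mat (din S)) (depol (dout S) (dout S))"
    using is_channel_dims[OF cS] dims by (intro mixing_realization_depol) auto
  moreover have "chan_eq S (super (din S) 1 (embed_mat (din S)) (depol (dout S) (dout S)) Q')"
    using app_super_depol[OF cQ', of "din S"] dims
    by (auto simp: chan_eq_def appS dims')
  ultimately have "maj_same Q' S"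
    unfolding maj_same_def dims' by auto
  then show ?thesis
    unfolding maj_def using dims iso by (auto simp: Q'_def)
qed

subsection \<open>Weyl operators and the twirl\<close>

definition weyl_phase :: "nat \<Rightarrow> nat \<Rightarrow> nat \<Rightarrow> complex" where
  "weyl_phase b t q = cis (2 * pi * (real t * real q) / real b)"

lemma weyl_phase_mult_cnj:
  "weyl_phase b t q * cnj (weyl_phase b t q') = cis (2 * pi * (real q - real q') / real b) ^ t"
proof -
  have "2 * pi * (real t * real q) / real b - 2 * pi * (real t * real q') / real b
      = real t * (2 * pi * (real q - real q') / real b)"
    by (cases "b = 0") (simp_all add: field_simps)
  then show ?thesis by (simp add: weyl_phase_def cis_cnj cis_mult DeMoivre)
qed

lemma cis_diff_ne_1:
  assumes q: "q < b" and q': "q' < b" and ne: "q \<noteq> q'"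
  shows "cis (2 * pi * (real q - real q') / real b) \<noteq> 1"
proof
  assume "cis (2 * pi * (real q - real q') / real b) = 1"
  then have "cos (2 * pi * (real q - real q') / real b) = 1"
    by (metis cis.sel(1) one_complex.sel(1))
  then obtain n :: int where n: "2 * pi * (real q - real q') / real b = real_of_int n * 2 * pi"
    by (auto simp: cos_one_2pi_int)
  have b: "0 < real b" using q by simp
  have "2 * pi * ((real q - real q') / real b) = 2 * pi * real_of_int n"
    using n by (simp add: algebra_simps)
  then have "(real q - real q') / real b = real_of_int n"
    by (subst (asm) mult_cancel_left) simp
  then have e: "real q - real q' = real_of_int n * real b"
    using b by (simp add: field_simps)
  moreover have "\<bar>real q - real q'\<bar> < real b" using q q' by auto
  ultimately have "\<bar>real_of_int n\<bar> < 1"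
    using b by (simp add: abs_mult)
  then have "n = 0" by linarith
  with e ne show False by simp
qed

lemma sum_weyl_phase:
  assumes q: "q < b" and q': "q' < b"
  shows "(\<Sum>t<b. weyl_phase b t q * cnj (weyl_phase b t q')) = (if q = q' then of_nat b else 0)"
proof (cases "q = q'")
  case False
  define z where "z = cis (2 * pi * (real q - real q') / real b)"
  have "z ^ b = cis (real b * (2 * pi * (real q - real q') / real b))"
    by (simp add: z_def DeMoivre)
  also have "real b * (2 * pi * (real q - real q') / real b) = 2 * pi * real_of_int (int q - int q')"
    using q by (simp add: field_simps)
  also have "cis (2 * pi * real_of_int (int q - int q')) = 1"
    by (rule cis_multiple_2pi) simp
  finally have "(\<Sum>t<b. z ^ t) = 0"
    using cis_diff_ne_1[OF q q' False] by (simp add: z_def sum_gp_strict)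
  with False show ?thesis by (simp add: weyl_phase_mult_cnj z_def)
qed (simp add: weyl_phase_mult_cnj)

lemma mod_add_left_inj:
  fixes b q s s' :: nat
  assumes "s < b" "s' < b" "(q + s) mod b = (q + s') mod b"
  shows "s = s'"
proof -
  have "s = s'" if le: "s \<le> s'" and "s' < b" and e: "(q + s) mod b = (q + s') mod b" for s s'
  proof -
    have "b dvd (q + s') - (q + s)"
      using mod_eq_dvd_iff_nat[of "q + s" "q + s'" b] le e by simp
    then have "b dvd s' - s" by simp
    moreover have "s' - s < b" using that by simp
    ultimately have "s' - s = 0" using dvd_imp_le by (metis gr0I not_less)
    then show "s = s'" using le by simp
  qed
  with assms show ?thesis by (metis nat_le_linear)
qed

lemma bij_betw_add_mod: "bij_betw (\<lambda>s. (q + s) mod b) {..<b} {..<(b::nat)}"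
proof (cases "b = 0")
  case False
  have "inj_on (\<lambda>s. (q + s) mod b) {..<b}"
    by (auto intro!: inj_onI dest: mod_add_left_inj)
  then show ?thesis
    using False by (simp add: bij_betw_def endo_inj_surj image_subsetI)
qed simp

lemma sum_add_mod_delta:
  fixes p q b :: nat
  assumes "p < b"
  shows "(\<Sum>s<b. if p = (q + s) mod b then (1::complex) else 0) = 1"
proof -
  have "(\<Sum>s<b. if p = (q + s) mod b then (1::complex) else 0) = (\<Sum>x<b. if p = x then 1 else 0)"
    using sum.reindex_bij_betw[OF bij_betw_add_mod[of q b], where g="\<lambda>x. if p = x then (1::complex) else 0"]
    by simp
  with assms show ?thesis by simp
qed

text \<open>The \<open>b\<^sup>2\<close> Weyl (clock-and-shift) operators on \<open>\<complex>\<^sup>b\<close>, indexed by \<open>y = s b + t\<close>: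
  \<open>weyl b y |q\<rangle> = \<omega>\<^sup>t\<^sup>q |q + s\<rangle>\<close>.\<close>

definition weyl :: "nat \<Rightarrow> nat \<Rightarrow> cmat" where
  "weyl b y p q = (if p = (q + y div b) mod b then weyl_phase b (y mod b) q else 0)"

lemma weyl_0: "q < b \<Longrightarrow> weyl b 0 p q = (if p = q then 1 else 0)"
  by (simp add: weyl_def weyl_phase_def)

lemma weyl_unitary:
  assumes i: "i < b" and j: "j < b"
  shows "(\<Sum>p<b. weyl b y p i * cnj (weyl b y p j)) = (if i = j then 1 else 0)"
proof -
  have "(\<Sum>p<b. weyl b y p i * cnj (weyl b y p j))
      = (if (i + y div b) mod b = (j + y div b) mod b
         then weyl_phase b (y mod b) i * cnj (weyl_phase b (y mod b) j) else 0)"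
    using i by (simp add: weyl_def if_zero_simps cong: if_cong)
  also have "\<dots> = (if i = j then 1 else 0)"
    using mod_add_left_inj[OF i j, of "y div b"] by (auto simp: add.commute weyl_phase_mult_cnj)
  finally show ?thesis .
qed

lemma sum_weyl_twirl:
  assumes p: "p < b" and p': "p' < b"
  shows "(\<Sum>y<b*b. sandwich b (weyl b y) W p p') = (if p = p' then of_nat b * mtrace b W else 0)"
proof -
  define C where "C s q q' = (p = (q + s) mod b \<and> p' = (q' + s) mod b)" for s q q'
  define \<chi> where "\<chi> t q q' = weyl_phase b t q * cnj (weyl_phase b t q')" for t q q'
  have "(\<Sum>y<b*b. sandwich b (weyl b y) W p p')
      = (\<Sum>s<b. \<Sum>t<b. \<Sum>q<b. \<Sum>q'<b. if C s q q' then W q q' * \<chi> t q q' else 0)"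
    unfolding sandwich_def sum_lessThan_mult[of _ b b]
    by (intro sum.cong refl) (auto simp: weyl_def C_def \<chi>_def)
  also have "\<dots> = (\<Sum>s<b. \<Sum>q<b. \<Sum>t<b. \<Sum>q'<b. if C s q q' then W q q' * \<chi> t q q' else 0)"
    by (intro sum.cong refl sum.swap)
  also have "\<dots> = (\<Sum>s<b. \<Sum>q<b. \<Sum>q'<b. \<Sum>t<b. if C s q q' then W q q' * \<chi> t q q' else 0)"
    by (intro sum.cong refl sum.swap)
  also have "\<dots> = (\<Sum>s<b. \<Sum>q<b. \<Sum>q'<b. if C s q q' then W q q' * (\<Sum>t<b. \<chi> t q q') else 0)"
    by (simp add: sum_distrib_left sum_if_zero cong: if_cong)
  also have "\<dots> = (\<Sum>s<b. \<Sum>q<b. \<Sum>q'<b. if q' = q then (if C s q q then W q q * of_nat b else 0) else 0)"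
    by (intro sum.cong refl) (auto simp: \<chi>_def sum_weyl_phase)
  also have "\<dots> = (\<Sum>s<b. \<Sum>q<b. if C s q q then W q q * of_nat b else 0)"
    by simp
  also have "\<dots> = (\<Sum>q<b. \<Sum>s<b. if C s q q then W q q * of_nat b else 0)"
    by (rule sum.swap)
  also have "\<dots> = (\<Sum>q<b. if p = p' then W q q * of_nat b * (\<Sum>s<b. if p = (q + s) mod b then 1 else 0) else 0)"
    by (intro sum.cong refl) (auto simp: C_def sum_distrib_left intro!: sum.cong sum.neutral)
  also have "\<dots> = (\<Sum>q<b. if p = p' then W q q * of_nat b else 0)"
    using p' by (intro sum.cong refl) (simp add: sum_add_mod_delta)
  also have "\<dots> = (if p = p' then of_nat b * mtrace b W else 0)"
    by (simp add: mtrace_def sum_distrib_left mult.commute)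
  finally show ?thesis .
qed

text \<open>Index permutation exchanging the tensor factors \<open>\<complex>\<^sup>a \<otimes> \<complex>\<^sup>D \<rightarrow> \<complex>\<^sup>D \<otimes> \<complex>\<^sup>a\<close>.\<close>

definition swap_idx :: "nat \<Rightarrow> nat \<Rightarrow> nat \<Rightarrow> nat" where
  "swap_idx a D i = (i mod D) * a + i div D"

definition unswap_idx :: "nat \<Rightarrow> nat \<Rightarrow> nat \<Rightarrow> nat" where
  "unswap_idx a D p = (p mod a) * D + p div a"

lemma swap_idx_less:
  assumes "i < a * D"
  shows "swap_idx a D i < D * a"
proof -
  have "0 < D" using assms by (cases D) auto
  moreover have "i div D < a" using assms by (simp add: mult.commute less_mult_imp_div_less)
  ultimately show ?thesis unfolding swap_idx_def by (intro block_index_less) auto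
qed

lemma unswap_idx_less:
  assumes "p < D * a"
  shows "unswap_idx a D p < a * D"
proof -
  have "0 < a" using assms by (cases a) auto
  moreover have "p div a < D" using assms by (simp add: less_mult_imp_div_less)
  ultimately show ?thesis unfolding unswap_idx_def by (intro block_index_less) auto
qed

lemma unswap_swap_idx:
  assumes "i < a * D"
  shows "unswap_idx a D (swap_idx a D i) = i"
proof -
  have "i div D < a" using assms by (simp add: mult.commute less_mult_imp_div_less)
  then have "swap_idx a D i mod a = i div D" "swap_idx a D i div a = i mod D"
    by (simp_all add: swap_idx_def)
  then show ?thesis by (simp add: unswap_idx_def)
qed

lemma swap_unswap_idx:
  assumes "p < D * a"
  shows "swap_idx a D (unswap_idx a D p) = p"
proof -
  have "p div a < D" using assms by (simp add: less_mult_imp_div_less)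
  then have "unswap_idx a D p mod D = p div a" "unswap_idx a D p div D = p mod a"
    by (simp_all add: unswap_idx_def)
  then show ?thesis by (simp add: swap_idx_def)
qed

definition swap_chan :: "nat \<Rightarrow> nat \<Rightarrow> channel" where
  "swap_chan a D = kraus_chan (a*D) (D*a) {()} (\<lambda>_ p i. if p = swap_idx a D i then 1 else 0)"

lemma swap_chan_simps [simp]: "din (swap_chan a D) = a * D" "dout (swap_chan a D) = D * a"
  by (simp_all add: swap_chan_def)

lemma sum_swap_idx_delta:
  fixes f :: "nat \<Rightarrow> complex"
  assumes p: "p < D * a"
  shows "(\<Sum>i<a*D. (if p = swap_idx a D i then 1 else 0) * f i) = f (unswap_idx a D p)"
proof -
  have "(\<Sum>i<a*D. (if p = swap_idx a D i then 1 else 0) * f i) = (\<Sum>i<a*D. if i = unswap_idx a D p then f i else 0)"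
    using p by (intro sum.cong) (auto simp: swap_unswap_idx unswap_swap_idx)
  then show ?thesis using unswap_idx_less[OF p] by simp
qed

lemma app_swap_chan:
  "app (swap_chan a D) Z = (\<lambda>p q. if p < D*a \<and> q < D*a then Z (unswap_idx a D p) (unswap_idx a D q) else 0)"
proof (intro ext)
  fix p q
  show "app (swap_chan a D) Z p q = (if p < D*a \<and> q < D*a then Z (unswap_idx a D p) (unswap_idx a D q) else 0)"
  proof (cases "p < D*a \<and> q < D*a")
    case True
    have "sandwich (a*D) (\<lambda>p i. if p = swap_idx a D i then 1 else 0) Z p q
        = (\<Sum>i<a*D. (if p = swap_idx a D i then 1 else 0)
             * (\<Sum>j<a*D. (if q = swap_idx a D j then 1 else 0) * Z i j))"
      by (simp add: sandwich_def sum_distrib_left mult_ac cnj_if_zero cong: if_cong)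
    also have "\<dots> = Z (unswap_idx a D p) (unswap_idx a D q)"
      using True by (simp add: sum_swap_idx_delta)
    finally show ?thesis using True by (simp add: swap_chan_def app_kraus_chan)
  qed (auto simp: swap_chan_def app_kraus_chan)
qed

lemma is_channel_swap_chan: "1 \<le> a \<Longrightarrow> 1 \<le> D \<Longrightarrow> is_channel (swap_chan a D)"
  unfolding swap_chan_def
proof (rule is_channel_kraus_chan)
  fix i j assume i: "i < a * D" and j: "j < a * D"
  then have "(swap_idx a D i = swap_idx a D j) = (i = j)"
    by (metis unswap_swap_idx)
  then show "(\<Sum>e\<in>{()}. \<Sum>p<D*a. (if p = swap_idx a D i then 1 else 0) * cnj (if p = swap_idx a D j then 1 else 0))
      = (if i = j then 1 else 0)"
    using swap_idx_less[OF i] by (auto simp: if_zero_simps cong: if_cong)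
qed auto

lemma app_swap_chan_kron:
  "app (swap_chan a D) (kron D F R) = restr (D*a) (kron a R F)"
proof -
  have "unswap_idx a D p div D = p mod a" "unswap_idx a D p mod D = p div a" if "p < D*a" for p
  proof -
    have "p div a < D" using that by (simp add: less_mult_imp_div_less)
    then show "unswap_idx a D p div D = p mod a" "unswap_idx a D p mod D = p div a"
      by (simp_all add: unswap_idx_def)
  qed
  then show ?thesis by (auto simp: app_swap_chan kron_def restr_def fun_eq_iff)
qed

lemma idtensor_kron:
  assumes "is_linear_map N"
  shows "idtensor k N (kron (din N) R F) = restr (k * dout N) (kron (dout N) R (app N F))"
proof (intro ext)
  fix x y
  show "idtensor k N (kron (din N) R F) x y = restr (k * dout N) (kron (dout N) R (app N F)) x y"
  proof (cases "x < k * dout N \<and> y < k * dout N")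
    case True
    have "app N (\<lambda>i j. kron (din N) R F (x div dout N * din N + i) (y div dout N * din N + j))
        = app N (\<lambda>i j. R (x div dout N) (y div dout N) * F i j)"
      by (rule app_cong) (simp add: kron_def)
    with True show ?thesis
      by (simp add: idtensor_def restr_def kron_def linear_app_scale[OF assms])
  qed (auto simp: idtensor_def restr_def)
qed

lemma app_ctensor_state:
  assumes "is_linear_map N" "din M = 1"
  shows "app (ctensor N M) X = restr (dout N * dout M) (kron (dout M) (app N X) (app M (unitmat 0 0)))"
proof (intro ext)
  fix x y
  show "app (ctensor N M) X x y = restr (dout N * dout M) (kron (dout M) (app N X) (app M (unitmat 0 0))) x y"
  proof (cases "x < dout N * dout M \<and> y < dout N * dout M")
    case True
    have "app (ctensor N M) X x y = (\<Sum>i<din N. \<Sum>j<din N. X i j *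
        app N (unitmat i j) (x div dout M) (y div dout M)) * app M (unitmat 0 0) (x mod dout M) (y mod dout M)"
      using True assms(2) unfolding app_def[of "ctensor N M"]
      by (auto simp: ctensor_def restr_def kron_def sum_distrib_left sum_distrib_right mult_ac intro!: sum.cong)
    with True show ?thesis
      by (simp add: restr_def kron_def linear_app_expand[OF assms(1), of X])
  qed (auto simp: app_def restr_def)
qed

lemma kron_unif: "restr (m*n) (kron n (unif m) (unif n)) = unif (m*n)"
proof (intro ext)
  fix x y
  have "(x div n = y div n \<and> x mod n = y mod n) = (x = y)" by (metis div_mult_mod_eq)
  then show "restr (m*n) (kron n (unif m) (unif n)) x y = unif (m*n) x y"
    by (auto simp: restr_def kron_def unif_eq less_mult_imp_div_less)
qed

text \<open>Apply \<open>weyl b y\<close> to \<open>\<complex>\<^sup>b\<close> controlled by \<open>y < b\<^sup>2\<close>, then discard the control register.\<close>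

definition controlled_weyl :: "nat \<Rightarrow> channel" where
  "controlled_weyl b = kraus_chan (b*b*b) b {..<b*b} (\<lambda>y p i. if i div b = y then weyl b y p (i mod b) else 0)"

lemma controlled_weyl_simps [simp]: "din (controlled_weyl b) = b*b*b" "dout (controlled_weyl b) = b"
  by (simp_all add: controlled_weyl_def)

lemma app_controlled_weyl_kron:
  assumes "p < b" "q < b"
  shows "app (controlled_weyl b) (kron b R G) p q = (\<Sum>y<b*b. R y y * sandwich b (weyl b y) G p q)"
proof -
  have "sandwich (b*b*b) (\<lambda>p i. if i div b = y then weyl b y p (i mod b) else 0) (kron b R G) p q
      = R y y * sandwich b (weyl b y) G p q" if "y < b*b" for y
    using that assms sum_block_sandwich[OF that that, of b "weyl b y p" "kron b R G" "weyl b y q"]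
    by (simp add: sandwich_def kron_def sum_distrib_left mult_ac)
  with assms show ?thesis by (simp add: controlled_weyl_def app_kraus_chan)
qed

lemma is_channel_controlled_weyl: "1 \<le> b \<Longrightarrow> is_channel (controlled_weyl b)"
  unfolding controlled_weyl_def
proof (rule is_channel_kraus_chan)
  fix i j assume "1 \<le> b" "i < b*b*b" "j < b*b*b"
  then have "i div b < b*b" "j div b < b*b" "i mod b < b" "j mod b < b"
    by (auto simp: less_mult_imp_div_less)
  then show "(\<Sum>y<b*b. \<Sum>p<b. (if i div b = y then weyl b y p (i mod b) else 0)
        * cnj (if j div b = y then weyl b y p (j mod b) else 0)) = (if i = j then 1 else 0)"
    by (simp add: if_zero_simps weyl_unitary cong: if_cong) (metis div_mult_mod_eq)
qed auto

definition append_unif :: "nat \<Rightarrow> channel" where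
  "append_unif b = kraus_chan b (b*b) {..<b} (\<lambda>m p i. if p = i*b+m then inv_sqrt b else 0)"

lemma append_unif_simps [simp]: "din (append_unif b) = b" "dout (append_unif b) = b*b"
  by (simp_all add: append_unif_def)

lemma app_append_unif: "app (append_unif b) W = restr (b*b) (kron b W (unif b))"
proof (intro ext)
  fix x y
  show "app (append_unif b) W x y = restr (b*b) (kron b W (unif b)) x y"
  proof (cases "x < b*b \<and> y < b*b")
    case True
    then have b: "0 < b" by (cases b) auto
    from True have xb: "x div b < b" "y div b < b" by (auto simp: less_mult_imp_div_less)
    have idx: "(x = i*b + m) = (i = x div b \<and> m = x mod b)" if "m < b" for x i m
      using that by auto
    have "(\<Sum>m<b. sandwich b (\<lambda>p i. if p = i*b+m then inv_sqrt b else 0) W x y)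
        = (if x mod b = y mod b then W (x div b) (y div b) / of_nat b else 0)"
      using b xb by (simp add: sandwich_def idx if_zero_simps inv_sqrt_scale cong: if_cong)
    with True b show ?thesis
      by (simp add: append_unif_def app_kraus_chan restr_def kron_def unif_eq)
  qed (auto simp: app_eq_0 restr_def)
qed

lemma is_channel_append_unif: "1 \<le> b \<Longrightarrow> is_channel (append_unif b)"
  unfolding append_unif_def
proof (rule is_channel_kraus_chan)
  fix i j assume b: "1 \<le> b" and "i < b" "j < b"
  then have "\<And>m. m < b \<Longrightarrow> i*b + m < b*b" "\<And>m. m < b \<Longrightarrow> j*b + m < b*b"
    by (auto intro: block_index_less)
  then show "(\<Sum>m<b. \<Sum>p<b*b. (if p = i*b+m then inv_sqrt b else 0) * cnj (if p = j*b+m then inv_sqrt b else 0))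
      = (if i = j then 1 else 0)"
    using b by (simp add: if_zero_simps cong: if_cong)
qed auto

text \<open>The post-processing channel \<open>R B \<rightarrow> B B\<close> of the superchannel realizing \<open>N \<otimes> u\<^sub>b\<close> from the
  pure state \<open>|0\<rangle>\<langle>0|\<close> on \<open>\<complex>\<^sup>b \<otimes> \<complex>\<^sup>b\<close>: apply \<open>N\<close> to the reference, twirl its output by the Weyl
  operator selected by the second register and append \<open>u\<^sub>b\<close>. On a maximally mixed second register
  the twirl depolarizes completely, which makes the superchannel mixing.\<close>

definition twirl_post :: "channel \<Rightarrow> channel" where
  "twirl_post N = comp (append_unif (dout N)) (comp (controlled_weyl (dout N))
     (comp (idtensor_chan (dout N * dout N) N) (swap_chan (din N) (dout N * dout N))))"

lemma twirl_post_simps [simp]: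
  "din (twirl_post N) = din N * (dout N * dout N)" "dout (twirl_post N) = dout N * dout N"
  by (simp_all add: twirl_post_def)

lemma is_channel_twirl_post:
  assumes c: "is_channel N"
  shows "is_channel (twirl_post N)"
proof -
  have p: "1 \<le> din N" "1 \<le> dout N" using c by (auto simp: is_channel_def)
  have c1: "is_channel (comp (idtensor_chan (dout N * dout N) N) (swap_chan (din N) (dout N * dout N)))"
    by (rule is_channel_comp[OF is_channel_idtensor_chan[OF c] is_channel_swap_chan]) (use p in auto)
  have c2: "is_channel (comp (controlled_weyl (dout N))
      (comp (idtensor_chan (dout N * dout N) N) (swap_chan (din N) (dout N * dout N))))"
    by (rule is_channel_comp[OF is_channel_controlled_weyl c1]) (use p in \<open>auto simp: mult.commute\<close>)
  show ?thesis
    unfolding twirl_post_def by (rule is_channel_comp[OF is_channel_append_unif c2]) (use p in auto)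
qed

lemma app_twirl_post_kron:
  assumes c: "is_channel N"
  defines "b \<equiv> dout N"
  shows "app (twirl_post N) (kron (b*b) F R)
       = restr (b*b) (kron b (\<lambda>p q. \<Sum>y<b*b. R y y * sandwich b (weyl b y) (app N F) p q) (unif b))"
proof -
  have lin: "is_linear_map N" using c by (simp add: is_channel_def)
  let ?G = "\<lambda>p q. \<Sum>y<b*b. R y y * sandwich b (weyl b y) (app N F) p q"
  have "app (idtensor_chan (b*b) N) (app (swap_chan (din N) (b*b)) (kron (b*b) F R))
      = idtensor (b*b) N (restr ((b*b) * din N) (kron (din N) R F))"
    by (simp add: app_swap_chan_kron app_idtensor_chan)
  also have "\<dots> = restr (b*b*b) (kron b R (app N F))"
    by (simp add: idtensor_restr idtensor_kron[OF lin] b_def)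
  finally have "app (twirl_post N) (kron (b*b) F R) = app (append_unif b) (app (controlled_weyl b) (kron b R (app N F)))"
    by (simp add: twirl_post_def app_comp b_def[symmetric] app_restr[of "controlled_weyl b", simplified])
  also have "\<dots> = app (append_unif b) ?G"
    by (rule app_cong) (simp add: app_controlled_weyl_kron)
  finally show ?thesis by (simp add: app_append_unif)
qed

lemma restr_kron_cong:
  assumes "\<And>p q. p < m \<Longrightarrow> q < m \<Longrightarrow> G p q = G' p q"
  shows "restr (m*n) (kron n G H) = restr (m*n) (kron n G' H)"
  using assms by (auto simp: restr_def kron_def less_mult_imp_div_less fun_eq_iff)

lemma twirl_post_mixing:
  assumes c: "is_channel N" and \<tau>: "density (din N) \<tau>"
  defines "b \<equiv> dout N"
  shows "app (twirl_post N) (kron (b*b) \<tau> (unif (b*b))) = restr (b*b) (unif (b*b))"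
proof -
  have b: "0 < b" using c by (simp add: is_channel_def b_def)
  have tr: "mtrace b (app N \<tau>) = 1"
    using mtrace_app[OF c] \<tau> by (simp add: density_def b_def)
  have "(\<Sum>y<b*b. unif (b*b) y y * sandwich b (weyl b y) (app N \<tau>) p q) = unif b p q"
    if "p < b" "q < b" for p q
  proof -
    have "(\<Sum>y<b*b. unif (b*b) y y * sandwich b (weyl b y) (app N \<tau>) p q)
        = (\<Sum>y<b*b. sandwich b (weyl b y) (app N \<tau>) p q) / of_nat (b*b)"
      by (simp add: unif_eq sum_divide_distrib)
    also have "\<dots> = unif b p q"
      using that b tr by (simp add: sum_weyl_twirl unif_eq)
    finally show ?thesis .
  qed
  then have "app (twirl_post N) (kron (b*b) \<tau> (unif (b*b))) = restr (b*b) (kron b (unif b) (unif b))"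
    unfolding app_twirl_post_kron[OF c, folded b_def] by (rule restr_kron_cong)
  then show ?thesis by (simp add: kron_unif)
qed

abbreviation unif_chan :: "nat \<Rightarrow> channel" where
  "unif_chan n \<equiv> state_chan n (unif n)"

lemma app_unif_chan_unitmat: "app (unif_chan n) (unitmat 0 0) = unif n"
  by (auto simp: app_state_chan unitmat_def unif_eq fun_eq_iff)

definition tensor_unif :: "channel \<Rightarrow> channel" where
  "tensor_unif N = ctensor N (unif_chan (dout N))"

lemma tensor_unif_simps [simp]: "din (tensor_unif N) = din N" "dout (tensor_unif N) = dout N * dout N"
  by (simp_all add: tensor_unif_def)

lemma app_tensor_unif:
  "is_channel N \<Longrightarrow> app (tensor_unif N) X = restr (dout N * dout N) (kron (dout N) (app N X) (unif (dout N)))"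
  by (simp add: tensor_unif_def app_ctensor_state is_channel_def app_unif_chan_unitmat)

lemma is_channel_tensor_unif:
  assumes c: "is_channel N"
  shows "is_channel (tensor_unif N)"
proof (rule is_channel_chan_eq)
  show "is_channel (comp (append_unif (dout N)) N)"
    using c by (intro is_channel_comp is_channel_append_unif) (auto simp: is_channel_def)
  show "chan_eq (comp (append_unif (dout N)) N) (tensor_unif N)"
    using c by (simp add: chan_eq_def app_comp app_append_unif app_tensor_unif)
qed

text \<open>The state \<open>|0\<rangle>\<langle>0|\<close> on \<open>\<complex>\<^sup>D\<close>, written as the image of \<open>u\<^sub>1\<close> under the isometry \<open>\<complex> \<rightarrow> \<complex>\<^sup>D\<close>
  as required by the definition of \<open>maj\<close>.\<close>

definition ket0_chan :: "nat \<Rightarrow> channel" where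
  "ket0_chan D = comp (iso_chan 1 D (embed_mat 1)) (unif_chan 1)"

lemma ket0_chan_simps [simp]: "din (ket0_chan D) = 1" "dout (ket0_chan D) = D"
  by (simp_all add: ket0_chan_def)

lemma idtensor_ket0_chan:
  assumes "0 < D" "x < a * D" "y < a * D"
  shows "idtensor a (ket0_chan D) Y x y = kron D Y (\<lambda>i j. if i = 0 \<and> j = 0 then 1 else 0) x y"
  using assms
  by (auto simp: idtensor_def ket0_chan_def app_comp app_embed_mat app_state_chan unif_eq kron_def)

lemma sandwich_weyl_0: "p < b \<Longrightarrow> q < b \<Longrightarrow> sandwich b (weyl b 0) G p q = G p q"
  by (simp add: sandwich_def weyl_0 if_zero_simps cong: if_cong)

lemma tensor_unif_eq_super:
  assumes c: "is_channel N"
  defines "a \<equiv> din N" and "b \<equiv> dout N"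
  shows "chan_eq (tensor_unif N) (super a a (embed_mat a) (twirl_post N) (ket0_chan (b*b)))"
  unfolding chan_eq_def
proof (intro conjI allI)
  fix X
  have b: "0 < b" using c by (simp add: is_channel_def b_def)
  let ?Y = "app (iso_chan a (a * 1) (embed_mat a)) X"
  let ?E00 = "\<lambda>i j :: nat. if i = 0 \<and> j = 0 then 1 else 0 :: complex"
  have "app (super a a (embed_mat a) (twirl_post N) (ket0_chan (b*b))) X
      = app (twirl_post N) (idtensor a (ket0_chan (b*b)) ?Y)"
    using app_super[of "twirl_post N" "ket0_chan (b*b)" a a "embed_mat a" X] by (simp add: b_def)
  also have "\<dots> = app (twirl_post N) (kron (b*b) ?Y ?E00)"
    by (rule app_cong) (use b in \<open>simp add: idtensor_ket0_chan a_def b_def\<close>)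
  also have "\<dots> = restr (b*b) (kron b (app N X) (unif b))"
  proof -
    have "app N ?Y = app N X"
      by (rule app_cong) (simp add: app_embed_mat a_def)
    then show ?thesis
      unfolding app_twirl_post_kron[OF c, folded b_def] using b
      by (intro restr_kron_cong) (simp add: sandwich_weyl_0 if_zero_simps cong: if_cong)
  qed
  finally show "app (tensor_unif N) X = app (super a a (embed_mat a) (twirl_post N) (ket0_chan (b*b))) X"
    by (simp add: app_tensor_unif[OF c] b_def)
qed (simp_all add: a_def b_def)

lemma mixing_realization_twirl_post:
  assumes c: "is_channel N"
  defines "a \<equiv> din N" and "b \<equiv> dout N"
  shows "mixing_realization 1 (b*b) a a (embed_mat a) (twirl_post N)"
  unfolding mixing_realization_def
proof (intro conjI allI impI)
  show "is_realization 1 (b*b) a a (embed_mat a) (twirl_post N)"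
    using is_channel_twirl_post[OF c] is_channel_dims[OF c]
    by (simp add: is_realization_def is_isometry_embed_mat a_def b_def)
next
  fix r' V' E' assume "is_realization 1 (b*b) a r' V' E'"
  then show "a \<le> r'"
    by (auto simp: is_realization_def dest: isometry_dim_le)
next
  fix \<tau> assume "density a \<tau>"
  then show "app (twirl_post N) (kron (b*b) \<tau> (unif (b*b))) = restr (b*b) (unif (b*b))"
    using twirl_post_mixing[OF c] by (simp add: a_def b_def)
qed

lemma unif1_maj_tensor_unif:
  assumes c: "is_channel N"
  shows "maj (unif_chan 1) (tensor_unif N)"
proof -
  define b where "b = dout N"
  have b: "1 \<le> b * b" using c by (simp add: is_channel_def b_def)
  have "maj_same (ket0_chan (b*b)) (tensor_unif N)"
    unfolding maj_same_def
    using mixing_realization_twirl_post[OF c] tensor_unif_eq_super[OF c] by (auto simp: b_def)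
  moreover have "is_isometry 1 (b*b) (embed_mat 1)"
    using b by (simp add: is_isometry_embed_mat)
  ultimately show ?thesis
    unfolding maj_def using b by (auto simp: b_def ket0_chan_def)
qed

subsection \<open>Monotone additive functions of channels\<close>

lemma app_unif_chan: "app (unif_chan n) X = (\<lambda>p q. mtrace 1 X * unif n p q)"
  by (auto simp: app_state_chan mtrace_def unif_eq fun_eq_iff)

lemma app_ctensor_unif_chan:
  "app (ctensor (unif_chan m) (unif_chan n)) X = (\<lambda>p q. mtrace 1 X * unif (m*n) p q)"
proof -
  have "is_linear_map (unif_chan m)"
    by (simp add: is_linear_map_def app_unif_chan mtrace_def fun_eq_iff algebra_simps)
  then have "app (ctensor (unif_chan m) (unif_chan n)) X
      = restr (m*n) (kron n (\<lambda>p q. mtrace 1 X * unif m p q) (unif n))"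
    by (simp add: app_ctensor_state app_unif_chan mtrace_def unitmat_def)
  also have "\<dots> = (\<lambda>p q. mtrace 1 X * restr (m*n) (kron n (unif m) (unif n)) p q)"
    by (simp add: restr_def kron_def fun_eq_iff)
  also have "\<dots> = (\<lambda>p q. mtrace 1 X * unif (m*n) p q)"
    by (simp only: kron_unif)
  finally show ?thesis .
qed

lemma is_channel_ctensor_unif_chan:
  "1 \<le> m \<Longrightarrow> 1 \<le> n \<Longrightarrow> is_channel (ctensor (unif_chan m) (unif_chan n))"
  by (rule is_channel_chan_eq[OF _ is_channel_state_unif[of "m*n"]])
     (auto simp: chan_eq_def app_unif_chan app_ctensor_unif_chan)

locale monotone_additive =
  fixes H :: "channel \<Rightarrow> real"
  assumes monotone: "\<And>N M. is_channel N \<Longrightarrow> is_channel M \<Longrightarrow> maj N M \<Longrightarrow> H N \<le> H M"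
    and additive: "\<And>N M. is_channel N \<Longrightarrow> is_channel M \<Longrightarrow> H (ctensor N M) = H N + H M"
begin

lemma le_replacement:
  assumes "is_channel Q" "is_channel S" "din S \<le> din Q" "dout Q \<le> dout S"
    and "\<And>X. app S X = (\<lambda>p q. mtrace (din S) X * unif (dout S) p q)"
  shows "H Q \<le> H S"
  using assms by (intro monotone maj_replacement)

lemma unif_chan_1: "H (unif_chan 1) = 0"
proof -
  have c1: "is_channel (unif_chan 1)" by (simp add: is_channel_state_unif)
  have c11: "is_channel (ctensor (unif_chan 1) (unif_chan 1))" by (simp add: is_channel_ctensor_unif_chan)
  have "H (unif_chan 1) \<le> H (ctensor (unif_chan 1) (unif_chan 1))"
    by (rule le_replacement[OF c1 c11]) (simp_all add: app_ctensor_unif_chan)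
  moreover have "H (ctensor (unif_chan 1) (unif_chan 1)) \<le> H (unif_chan 1)"
    by (rule le_replacement[OF c11 c1]) (simp_all add: app_unif_chan)
  ultimately show ?thesis using additive[OF c1 c1] by simp
qed

lemma unif_chan_power_2: "H (unif_chan (2^k)) \<le> real k * H (unif_chan 2)"
proof (induction k)
  case 0
  then show ?case using unif_chan_1 by simp
next
  case (Suc k)
  have c2: "is_channel (unif_chan 2)" and ck: "is_channel (unif_chan (2^k))"
    by (simp_all add: is_channel_state_unif)
  have "H (unif_chan (2^Suc k)) \<le> H (ctensor (unif_chan 2) (unif_chan (2^k)))"
    by (rule le_replacement[OF is_channel_state_unif is_channel_ctensor_unif_chan])
       (simp_all add: app_ctensor_unif_chan)
  also have "\<dots> = H (unif_chan 2) + H (unif_chan (2^k))"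
    by (rule additive[OF c2 ck])
  finally show ?case using Suc by (simp add: algebra_simps)
qed

lemma unif_chan_nonpos:
  assumes "H (unif_chan 2) \<le> 0" "1 \<le> n"
  shows "H (unif_chan n) \<le> 0"
proof -
  have "H (unif_chan n) \<le> H (unif_chan (2^n))"
    using assms(2) less_exp[of n]
    by (intro le_replacement is_channel_state_unif) (simp_all add: app_unif_chan)
  also have "\<dots> \<le> real n * H (unif_chan 2)" by (rule unif_chan_power_2)
  also have "\<dots> \<le> 0" using assms(1) by (simp add: mult_nonneg_nonpos)
  finally show ?thesis .
qed

lemma le_unif_chan_dout: "is_channel N \<Longrightarrow> H N \<le> H (unif_chan (dout N))"
  by (intro le_replacement is_channel_state_unif) (auto simp: is_channel_def app_unif_chan)

lemma neg_unif_chan_dout_le: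
  assumes c: "is_channel N"
  shows "- H (unif_chan (dout N)) \<le> H N"
proof -
  have b: "1 \<le> dout N" using c by (simp add: is_channel_def)
  have "H (unif_chan 1) \<le> H (tensor_unif N)"
    by (rule monotone[OF is_channel_state_unif is_channel_tensor_unif[OF c] unif1_maj_tensor_unif[OF c]]) simp
  also have "\<dots> = H N + H (unif_chan (dout N))"
    unfolding tensor_unif_def by (rule additive[OF c is_channel_state_unif[OF b]])
  finally show ?thesis using unif_chan_1 by simp
qed

lemma eq_0_if_unif_chan_2_nonpos:
  assumes "H (unif_chan 2) \<le> 0" "is_channel N"
  shows "H N = 0"
  using le_unif_chan_dout[OF assms(2)] neg_unif_chan_dout_le[OF assms(2)]
    unif_chan_nonpos[OF assms(1), of "dout N"] assms(2)
  by (auto simp: is_channel_def)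

end

theorem mainTheorem11:
  fixes H :: "channel \<Rightarrow> real"
  assumes monotone: "\<And>N M. is_channel N \<Longrightarrow> is_channel M \<Longrightarrow> maj N M \<Longrightarrow> H N \<le> H M"
    and additive: "\<And>N M. is_channel N \<Longrightarrow> is_channel M \<Longrightarrow> H (ctensor N M) = H N + H M"
    and nonzero: "\<exists>N. is_channel N \<and> H N \<noteq> 0"
  shows "H (state_chan 2 (unif 2)) > 0"
proof (rule ccontr)
  interpret monotone_additive H
    using monotone additive by unfold_locales
  assume "\<not> H (state_chan 2 (unif 2)) > 0"
  then have "H N = 0" if "is_channel N" for N
    using that by (intro eq_0_if_unif_chan_2_nonpos) simp_all
  with nonzero show False by blast
qed

end
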